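(* Consider the post-withdrawal-lock phase of the following crowdsale protocol, run in discrete blocks $s = t, t+1, \dots, u$. At every moment the state is a finite set of \emph{active} bids, each bid $A$ having a current amount $v(A) > 0$ and a personal cap $c(A) > 0$; the \emph{valuation} is $V = \sum_{A \text{ active}} v(A)$ (with $V = 0$ if there are no active bids). The set of active bids present at the start of block $t$ is arbitrary (any finite set of bids with positive amounts and positive caps). In each block $s$ with $t \le s \le u$ the protocol performs: Step 1 (receive bids): any finite number of new bids arrive one after another; each new bid $A$ has an amount $v(A) > 0$ and a cap $c(A)$ satisfying $c(A) > V$, where $V$ is the valuation at the moment of its arrival; it is then added to the active set. Step 3 (automatic withdrawals): while there is an active bid $B$ with $V > c(B)$, repeat: let $m = \min\{c(A) : A \text{ active}\}$, let $B_1, \dots, B_k$ be all active bids with $c(B_i) = m$, and let $S = \sum_{i=1}^k v(B_i)$. If $V - S \ge m$, all of $B_1, \dots, B_k$ are refunded in full and removed from the active set. Otherwise, with $q = (V - m)/S$, each $v(B_i)$ is replaced by $(1-q)\, v(B_i)$ (these bids remain active), so that the valuation becomes exactly $m$. The valuation $V$ is recomputed after each iteration. Let $V_s$ denote the valuation at the end of block $s$ (after Step 3). Then for every block $s$ with $t < s \le u$, one has $V_s \ge V_{s-1}$; that is, after the withdrawal lock time $t$ the crowdsale valuation is monotonically non-decreasing, regardless of which bids buyers submit.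
   Context: This models an interactive coin offering smart contract after the "withdrawal lock" time $t$ (no voluntary withdrawals are allowed after $t$). A bid's personal cap $c(A)$ is the maximum total sale valuation at which its owner is willing to participate; if the valuation exceeds it, the bid is (fully or partially) refunded by the automatic-withdrawal step described in the claim. Only active bids count toward the valuation $V$. *)

theory Defs
  imports Complex_Main "HOL-Library.Multiset"
begin

text \<open>A bid is a pair (amount v, personal cap c). The active bids form a finite
multiset of bids (distinct bids may carry identical amount and cap).\<close>
type_synonym bid = "real \<times> real"
type_synonym state = "bid multiset"

definition amount :: "bid \<Rightarrow> real" where "amount b = fst b"
definition cap :: "bid \<Rightarrow> real" where "cap b = snd b"

definition valuation :: "state \<Rightarrow> real" where
  "valuation M = (\<Sum>b\<in>#M. amount b)"

definition valid_state :: "state \<Rightarrow> bool" where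
  "valid_state M \<longleftrightarrow> (\<forall>b\<in>#M. amount b > 0 \<and> cap b > 0)"

definition receive_bid :: "state \<Rightarrow> state \<Rightarrow> bool" where
  "receive_bid M M' \<longleftrightarrow>
     (\<exists>v c. v > 0 \<and> c > valuation M \<and> M' = add_mset (v, c) M)"

definition withdraw_iter :: "state \<Rightarrow> state \<Rightarrow> bool" where
  "withdraw_iter M M' \<longleftrightarrow>
     (\<exists>b\<in>#M. valuation M > cap b) \<and>
     (let m = Min (cap ` set_mset M);
          Bs = filter_mset (\<lambda>b. cap b = m) M;
          S = valuation Bs;
          V = valuation M
      in if V - S \<ge> m then M' = M - Bs
         else (let q = (V - m) / S in
               M' = image_mset (\<lambda>b. if cap b = m then ((1 - q) * amount b, cap b) else b) M))"

definition withdraw_all :: "state \<Rightarrow> state \<Rightarrow> bool" where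
  "withdraw_all M M' \<longleftrightarrow>
     withdraw_iter\<^sup>*\<^sup>* M M' \<and> \<not> (\<exists>b\<in>#M'. valuation M' > cap b)"

definition block :: "state \<Rightarrow> state \<Rightarrow> bool" where
  "block M M' \<longleftrightarrow> (\<exists>M1. receive_bid\<^sup>*\<^sup>* M M1 \<and> withdraw_all M1 M')"

end

theory Submission
  imports Defs
begin

text \<open>At the end of a block no active bid has cap below the valuation V. Hence at the start
of the next block every cap is at least V, and the valuation is V. Both facts stay true during
the block: an arriving bid raises the valuation and has cap above it, and an automatic withdrawal
only removes or shrinks bids, never creates caps, and leaves the valuation at least the smallest
active cap. So the valuation at the end of the block is again at least V.\<close>

lemma valuation_union [simp]: "valuation (A + B) = valuation A + valuation B"
  unfolding valuation_def by simp

lemma valuation_add_mset [simp]: "valuation (add_mset b M) = amount b + valuation M"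
  unfolding valuation_def by simp

lemma valuation_filter_mset_split:
  "valuation M = valuation (filter_mset P M) + valuation (filter_mset (\<lambda>b. \<not> P b) M)"
  by (metis multiset_partition valuation_union)

lemma withdraw_iter_caps_subset:
  assumes "withdraw_iter M M'"
  shows "cap ` set_mset M' \<subseteq> cap ` set_mset M"
  using assms unfolding withdraw_iter_def Let_def
  by (auto split: if_splits dest: in_diffD simp: cap_def) force

lemma withdraw_iter_valuation_ge_Min_cap:
  assumes "withdraw_iter M M'"
  shows "Min (cap ` set_mset M) \<le> valuation M'"
proof -
  define m where "m = Min (cap ` set_mset M)"
  define Bs where "Bs = filter_mset (\<lambda>b. cap b = m) M"
  define Rest where "Rest = filter_mset (\<lambda>b. cap b \<noteq> m) M"
  define S where "S = valuation Bs"
  define V where "V = valuation M"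
  obtain b where b: "b \<in># M" "cap b < V"
    using assms unfolding withdraw_iter_def V_def by blast
  have "m \<le> cap b"
    unfolding m_def using b by (intro Min_le) auto
  with b have m_lt_V: "m < V" by simp
  have V_split: "V = S + valuation Rest"
    unfolding V_def S_def Bs_def Rest_def by (rule valuation_filter_mset_split)
  have step: "if V - S \<ge> m then M' = M - Bs
      else M' = image_mset (\<lambda>b. if cap b = m then ((1 - (V - m) / S) * amount b, cap b) else b) M"
    using assms unfolding withdraw_iter_def Let_def m_def Bs_def S_def V_def by auto
  show ?thesis
  proof (cases "V - S \<ge> m")
    case True
    have "M - Bs = Rest"
      unfolding Bs_def Rest_def by (metis add_diff_cancel_left' multiset_partition)
    with True step have "valuation M' = V - S"
      using V_split by simp
    with True show ?thesis unfolding m_def by simp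
  next
    case False
    define q where "q = (V - m) / S"
    define f where "f = (\<lambda>b. if cap b = m then ((1 - q) * amount b, cap b) else b)"
    have M': "M' = image_mset f M"
      using step False unfolding q_def f_def by simp
    have S_pos: "S > 0"
      using False m_lt_V by simp
    have "valuation (image_mset f Bs) = (\<Sum>b\<in>#Bs. (1 - q) * amount b)"
      unfolding valuation_def Bs_def f_def image_mset.compositionality comp_def
      by (intro arg_cong[where f = sum_mset] image_mset_cong) (auto simp: amount_def)
    also have "\<dots> = (1 - q) * S"
      unfolding S_def valuation_def by (simp add: sum_mset_distrib_left)
    finally have "valuation (image_mset f Bs) = (1 - q) * S" .
    moreover have "image_mset f Rest = Rest"
      unfolding Rest_def f_def by (induction M) auto
    moreover have "image_mset f M = image_mset f Bs + image_mset f Rest"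
      unfolding Bs_def Rest_def by (metis image_mset_union multiset_partition)
    ultimately have "valuation M' = (1 - q) * S + (V - S)"
      using M' V_split by simp
    also have "\<dots> = m"
      using S_pos unfolding q_def by (simp add: field_simps)
    finally show ?thesis unfolding m_def by simp
  qed
qed

definition above_floor :: "real \<Rightarrow> state \<Rightarrow> bool" where
  "above_floor V0 M \<longleftrightarrow> (\<forall>b\<in>#M. V0 \<le> cap b) \<and> V0 \<le> valuation M"

lemma receive_bid_above_floor:
  assumes "receive_bid M M'" and "above_floor V0 M"
  shows "above_floor V0 M'"
  using assms unfolding receive_bid_def above_floor_def by (auto simp: amount_def cap_def)

lemma withdraw_iter_above_floor:
  assumes "withdraw_iter M M'" and "above_floor V0 M"
  shows "above_floor V0 M'"
proof -
  have caps: "\<forall>b\<in>#M. V0 \<le> cap b"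
    using assms(2) unfolding above_floor_def by blast
  have "M \<noteq> {#}"
    using assms(1) unfolding withdraw_iter_def by auto
  then have "V0 \<le> Min (cap ` set_mset M)"
    using caps by (subst Min_ge_iff) auto
  also have "\<dots> \<le> valuation M'"
    using assms(1) by (rule withdraw_iter_valuation_ge_Min_cap)
  finally have "V0 \<le> valuation M'" .
  moreover have "\<forall>b\<in>#M'. V0 \<le> cap b"
    using caps withdraw_iter_caps_subset[OF assms(1)] by fastforce
  ultimately show ?thesis
    unfolding above_floor_def by blast
qed

lemma rtranclp_preserves_above_floor:
  assumes "above_floor V0 M" and "r\<^sup>*\<^sup>* M M'"
    and "\<And>N N'. r N N' \<Longrightarrow> above_floor V0 N \<Longrightarrow> above_floor V0 N'"
  shows "above_floor V0 M'"
  using assms(2,1) by (induction rule: rtranclp_induct) (use assms(3) in blast)+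

lemma block_valuation_mono:
  assumes "\<forall>b\<in>#M. valuation M \<le> cap b" and "block M M'"
  shows "valuation M \<le> valuation M'"
proof -
  obtain M1 where arrivals: "receive_bid\<^sup>*\<^sup>* M M1" and withdrawals: "withdraw_iter\<^sup>*\<^sup>* M1 M'"
    using assms(2) unfolding block_def withdraw_all_def by blast
  have "above_floor (valuation M) M"
    using assms(1) unfolding above_floor_def by simp
  then have "above_floor (valuation M) M1"
    using arrivals receive_bid_above_floor by (rule rtranclp_preserves_above_floor)
  then have "above_floor (valuation M) M'"
    using withdrawals withdraw_iter_above_floor by (rule rtranclp_preserves_above_floor)
  then show ?thesis
    unfolding above_floor_def by blast
qed

lemma block_caps_ge_valuation:
  assumes "block M M'"
  shows "\<forall>b\<in>#M'. valuation M' \<le> cap b"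
  using assms unfolding block_def withdraw_all_def by (auto simp: not_less)

theorem mainTheorem1:
  fixes init :: state and X :: "nat \<Rightarrow> state" and t u :: nat
  assumes "valid_state init"
    and "block init (X t)"
    and "\<And>s. t < s \<Longrightarrow> s \<le> u \<Longrightarrow> block (X (s - 1)) (X s)"
  shows "\<forall>s. t < s \<and> s \<le> u \<longrightarrow> valuation (X s) \<ge> valuation (X (s - 1))"
proof (intro allI impI)
  fix s assume s: "t < s \<and> s \<le> u"
  have "\<exists>M. block M (X (s - 1))"
  proof (cases "s - 1 = t")
    case True
    then show ?thesis using assms(2) by auto
  next
    case False
    then have "block (X (s - 1 - 1)) (X (s - 1))"
      using s by (intro assms(3)) auto
    then show ?thesis by blast
  qed
  then have "\<forall>b\<in>#X (s - 1). valuation (X (s - 1)) \<le> cap b"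
    using block_caps_ge_valuation by blast
  then show "valuation (X s) \<ge> valuation (X (s - 1))"
    using block_valuation_mono assms(3) s by blast
qed

end
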